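(* Let $\mathcal{A}=\{A_1,\dots,A_l\}$ be a finite family of real $n\times n$ matrices, each with a strictly dominant eigenvalue $\lambda_i$, and let $\tilde r_i,\tilde h_i$, $\tilde R$, $\tilde H$, $\mathcal{K}_{inner}(\mathcal{A})=\{\tilde Rp:p\ge0\}$ and $\mathcal{K}_{outer}(\mathcal{A})=\{r:\tilde Hr\ge0\}$ be as constructed below. Fix $\tau_i>0$ and $w_i>0$ for each $i$, and define $$\tilde A_i:=I+\tau_i(A_i-\lambda_iI),\qquad W_i:=\tilde A_i-w_i\,\tilde r_i\tilde h_i^T.$$ Let $R^{(k)}\in\mathbb{R}^{n\times m}$ be a matrix with no zero column such that every nonzero element of $\mathcal{K}_{inner}(\mathcal{A})$ lies in the interior of $\{R^{(k)}p:p\ge0\}$, and every nonzero element of $\{R^{(k)}p:p\ge0\}$ lies in the interior of $\mathcal{K}_{outer}(\mathcal{A})$. Let $R^{(k+1)}:=[R^{(k)},W_1R^{(k)},\dots,W_lR^{(k)}]\in\mathbb{R}^{n\times (l+1)m}$. Then for each $i$, with $\alpha_i:=1/\tau_i-\lambda_i$, there exists a matrix $P_i\in\mathbb{R}^{(l+1)m\times m}$ with all entries strictly positive such that $$(\alpha_iI+A_i)R^{(k)}=R^{(k+1)}P_i.$$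
   Context: Inequalities are entrywise. A real square matrix $A$ has a strictly dominant eigenvalue if it has a real, algebraically simple eigenvalue $\lambda$ with $\operatorname{Re}\mu<\lambda$ for every other eigenvalue $\mu$. Construction of $\tilde r_i,\tilde h_i$: for each $i$ let $\hat r_i,\hat h_i$ be nonzero right and left eigenvectors of $A_i$ for $\lambda_i$; set $\tilde h_1:=\hat h_1$; for each $k$ choose $\tilde r_k\in\{\hat r_k,-\hat r_k\}$ with $\langle\tilde h_1,\tilde r_k\rangle\ge0$; for $j>1$ choose $\tilde h_j\in\{\hat h_j,-\hat h_j\}$ with $\langle\tilde h_j,\tilde r_j\rangle\ge0$. $\tilde R$ is the $n\times l$ matrix with columns $\tilde r_k$, $\tilde H$ the $l\times n$ matrix with rows $\tilde h_j^T$. *)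

theory Defs
  imports "HOL-Analysis.Analysis" "HOL-Computational_Algebra.Polynomial"
begin

definition charpoly :: "real^'n^'n \<Rightarrow> complex poly" where
  "charpoly A = det (mat [:0, 1:] - (\<chi> i j. [:complex_of_real (A $ i $ j):]))"

definition strictly_dominant_eigenvalue :: "real^'n^'n \<Rightarrow> real \<Rightarrow> bool" where
  "strictly_dominant_eigenvalue A lam \<longleftrightarrow>
     poly (charpoly A) (complex_of_real lam) = 0 \<and>
     order (complex_of_real lam) (charpoly A) = 1 \<and>
     (\<forall>mu. poly (charpoly A) mu = 0 \<and> mu \<noteq> complex_of_real lam \<longrightarrow> Re mu < lam)"

definition outer :: "real^'n \<Rightarrow> real^'n \<Rightarrow> real^'n^'n" where
  "outer r h = (\<chi> a b. r $ a * h $ b)"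

definition col_cone :: "(nat \<Rightarrow> real^'n) \<Rightarrow> nat \<Rightarrow> (real^'n) set" where
  "col_cone c m = {(\<Sum>j<m. p j *\<^sub>R c j) | p. \<forall>j<m. p j \<ge> 0}"

definition row_cone :: "(nat \<Rightarrow> real^'n) \<Rightarrow> nat \<Rightarrow> (real^'n) set" where
  "row_cone h l = {r. \<forall>j<l. h j \<bullet> r \<ge> 0}"

text \<open>Columns of [R, W_0 R, ..., W_(l-1) R] (0-based W), where R has m columns:
  column b*m + j is R j for b = 0 and W_(b-1) R j for b \<ge> 1.\<close>
definition next_cols :: "(nat \<Rightarrow> real^'n^'n) \<Rightarrow> (nat \<Rightarrow> real^'n) \<Rightarrow> nat \<Rightarrow> nat \<Rightarrow> real^'n" where
  "next_cols W R m q = (if q < m then R q else W (q div m - 1) *v R (q mod m))"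

end

theory Submission
  imports Defs
begin

text \<open>Write \<open>R\<close> for \<open>R\<^sup>(\<^sup>k\<^sup>)\<close> and \<open>R'\<close> for \<open>R\<^sup>(\<^sup>k\<^sup>+\<^sup>1\<^sup>)\<close>. Expanding \<open>W\<^sub>i\<close> gives
  \<open>(\<alpha>\<^sub>i I + A\<^sub>i) x = (1/\<tau>\<^sub>i) W\<^sub>i x + (w\<^sub>i/\<tau>\<^sub>i) (h\<^sub>i \<bullet> x) r\<^sub>i\<close> for every \<open>x\<close>.
  For a column \<open>x\<close> of \<open>R\<close> the scalar \<open>h\<^sub>i \<bullet> x\<close> is positive because \<open>x\<close> lies in the interior
  of the outer cone; and \<open>r\<^sub>i\<close>, lying in the interior of the cone of \<open>R\<close>, is a strictly positive
  combination of the columns of \<open>R\<close> plus a small positive multiple of the sum of the remaining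
  columns of \<open>R'\<close>. Since \<open>W\<^sub>i x\<close> is itself a column of \<open>R'\<close>, every column of \<open>R'\<close> gets a
  positive coefficient.\<close>

lemma interior_diff_scaleR_mem:
  fixes K :: "'a::real_normed_vector set"
  assumes "x \<in> interior K"
  shows "\<exists>d>0. x - d *\<^sub>R v \<in> K"
proof -
  obtain e where e: "e > 0" "ball x e \<subseteq> K"
    using assms mem_interior by blast
  define d where "d = e / (norm v + 1)"
  have norm_pos: "norm v + 1 > 0"
    by (simp add: add_nonneg_pos)
  then have d: "d > 0"
    using e by (simp add: d_def)
  have "norm (d *\<^sub>R v) = d * norm v"
    using d by simp
  also have "\<dots> < d * (norm v + 1)"
    using d by simp
  also have "\<dots> = e"
    using norm_pos by (simp add: d_def)
  finally have "x - d *\<^sub>R v \<in> ball x e"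
    by (simp add: dist_norm)
  then show ?thesis
    using d e by blast
qed

lemma col_cone_column:
  assumes "b < m"
  shows "c b \<in> col_cone c m"
proof -
  have "(\<Sum>j<m. (if j = b then 1 else 0) *\<^sub>R c j) = c b"
    using assms by (simp add: if_distrib[of "\<lambda>t. t *\<^sub>R _"] sum.delta' cong: if_cong)
  then show ?thesis
    unfolding col_cone_def by (intro CollectI exI[of _ "\<lambda>j. if j = b then 1 else 0"]) auto
qed

lemma interior_row_cone_inner_pos:
  assumes "x \<in> interior (row_cone h l)" and "j < l" and "h j \<noteq> 0"
  shows "h j \<bullet> x > 0"
proof -
  obtain d where d: "d > 0" "x - d *\<^sub>R h j \<in> row_cone h l"
    using interior_diff_scaleR_mem[OF assms(1)] by blast
  then have "d * (h j \<bullet> h j) \<le> h j \<bullet> x"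
    using assms(2) by (simp add: row_cone_def inner_diff_right)
  moreover have "h j \<bullet> h j > 0"
    using assms(3) by simp
  ultimately show ?thesis
    using d(1) by (smt (verit) mult_pos_pos)
qed

text \<open>Shifting an interior point by \<open>e (\<Sum>\<^sub>j c\<^sub>j + v)\<close> keeps it in the cone; this makes
  every coefficient strictly positive and leaves a positive multiple of \<open>v\<close>.\<close>

lemma interior_col_cone_positive_decomp:
  assumes "x \<in> interior (col_cone c m)"
  shows "\<exists>q e. (\<forall>j<m. q j > 0) \<and> e > 0 \<and> x = (\<Sum>j<m. q j *\<^sub>R c j) + e *\<^sub>R v"
proof -
  obtain e where e: "e > 0" "x - e *\<^sub>R ((\<Sum>j<m. c j) + v) \<in> col_cone c m"
    using interior_diff_scaleR_mem[OF assms] by blast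
  then obtain p where p: "\<forall>j<m. p j \<ge> 0"
      "x - e *\<^sub>R ((\<Sum>j<m. c j) + v) = (\<Sum>j<m. p j *\<^sub>R c j)"
    unfolding col_cone_def by blast
  have "x = (\<Sum>j<m. (p j + e) *\<^sub>R c j) + e *\<^sub>R v"
    using p(2) by (simp add: algebra_simps scaleR_sum_right sum.distrib)
  moreover have "\<forall>j<m. p j + e > 0"
    using p(1) e(1) by (simp add: add_nonneg_pos)
  ultimately show ?thesis
    using e(1) by (intro exI[of _ "\<lambda>j. p j + e"] exI[of _ e]) simp
qed

lemma outer_mult_vec: "outer r h *v x = (h \<bullet> x) *\<^sub>R r"
  by (simp add: vec_eq_iff outer_def matrix_vector_mult_def inner_vec_def sum_distrib_left
      mult.assoc mult.commute mult.left_commute)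

lemma scaleR_matrix_vector_mult: "(k *\<^sub>R M) *v x = k *\<^sub>R (M *v x)"
  for M :: "real^'n^'m"
  by (simp add: vec_eq_iff matrix_vector_mult_def sum_distrib_left mult.assoc)

lemma shifted_matrix_vector_mult_eq:
  fixes A :: "real^'n^'n"
  assumes "tau \<noteq> 0"
  shows "((1 / tau - lam) *\<^sub>R mat 1 + A) *v x
    = (1 / tau) *\<^sub>R (((mat 1 + tau *\<^sub>R (A - lam *\<^sub>R mat 1)) - w *\<^sub>R outer r h) *v x)
      + (w / tau * (h \<bullet> x)) *\<^sub>R r"
  using assms
  by (simp add: matrix_vector_mult_add_rdistrib matrix_vector_mult_diff_rdistrib
      outer_mult_vec scaleR_matrix_vector_mult algebra_simps)

lemma next_cols_block:
  assumes "b < m"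
  shows "next_cols W R m ((i + 1) * m + b) = W i *v R b"
proof -
  have "((i + 1) * m + b) div m = i + 1"
    using assms by (simp add: div_add1_eq)
  moreover have "((i + 1) * m + b) mod m = b"
    using assms by (simp only: mod_mult_self3 mod_less)
  ultimately show ?thesis
    by (simp add: next_cols_def)
qed

lemma sum_next_cols_split:
  "(\<Sum>a<(l + 1) * m. f a *\<^sub>R next_cols W R m a)
    = (\<Sum>j<m. f j *\<^sub>R R j) + (\<Sum>a\<in>{m..<(l + 1) * m}. f a *\<^sub>R next_cols W R m a)"
proof -
  have "{..<(l + 1) * m} = {..<m} \<union> {m..<(l + 1) * m}"
    by (simp add: ivl_disj_un_one)
  then have "(\<Sum>a<(l + 1) * m. f a *\<^sub>R next_cols W R m a)
      = (\<Sum>a<m. f a *\<^sub>R next_cols W R m a) + (\<Sum>a\<in>{m..<(l + 1) * m}. f a *\<^sub>R next_cols W R m a)"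
    by (simp add: sum.union_disjoint ivl_disj_int_one)
  moreover have "(\<Sum>a<m. f a *\<^sub>R next_cols W R m a) = (\<Sum>j<m. f j *\<^sub>R R j)"
    by (rule sum.cong) (simp_all add: next_cols_def)
  ultimately show ?thesis
    by simp
qed

lemma next_cols_positive_combination:
  assumes "i < l" and "b < m" and q: "\<forall>j<m. q j > 0" and "e > 0" and "t \<ge> 0"
  shows "\<exists>f. (\<forall>a<(l + 1) * m. f a > 0) \<and>
    (\<Sum>j<m. q j *\<^sub>R R j) + e *\<^sub>R (\<Sum>a\<in>{m..<(l + 1) * m}. next_cols W R m a) + t *\<^sub>R (W i *v R b)
      = (\<Sum>a<(l + 1) * m. f a *\<^sub>R next_cols W R m a)"
proof -
  define k where "k = (i + 1) * m + b"
  define f where "f a = (if a < m then q a else e + (if a = k then t else 0))" for a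
  have "k < (i + 2) * m"
    using assms(2) by (simp add: k_def)
  also have "\<dots> \<le> (l + 1) * m"
    using assms(1) by (intro mult_right_mono) auto
  finally have k: "k \<in> {m..<(l + 1) * m}"
    by (simp add: k_def)
  have col_k: "next_cols W R m k = W i *v R b"
    unfolding k_def by (rule next_cols_block[OF assms(2)])
  have "(\<Sum>a\<in>{m..<(l + 1) * m}. f a *\<^sub>R next_cols W R m a)
      = (\<Sum>a\<in>{m..<(l + 1) * m}. e *\<^sub>R next_cols W R m a
          + (if a = k then t *\<^sub>R next_cols W R m a else 0))"
    by (rule sum.cong) (auto simp: f_def algebra_simps)
  also have "\<dots> = e *\<^sub>R (\<Sum>a\<in>{m..<(l + 1) * m}. next_cols W R m a) + t *\<^sub>R (W i *v R b)"
    using k col_k by (simp add: sum.distrib scaleR_sum_right)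
  finally have new_cols: "(\<Sum>a\<in>{m..<(l + 1) * m}. f a *\<^sub>R next_cols W R m a)
      = e *\<^sub>R (\<Sum>a\<in>{m..<(l + 1) * m}. next_cols W R m a) + t *\<^sub>R (W i *v R b)" .
  have old_cols: "(\<Sum>j<m. f j *\<^sub>R R j) = (\<Sum>j<m. q j *\<^sub>R R j)"
    by (rule sum.cong) (simp_all add: f_def)
  have "(\<Sum>a<(l + 1) * m. f a *\<^sub>R next_cols W R m a)
      = (\<Sum>j<m. q j *\<^sub>R R j) + e *\<^sub>R (\<Sum>a\<in>{m..<(l + 1) * m}. next_cols W R m a)
        + t *\<^sub>R (W i *v R b)"
    by (simp only: sum_next_cols_split new_cols old_cols add.assoc)
  moreover have "\<forall>a<(l + 1) * m. f a > 0"
    using q \<open>e > 0\<close> \<open>t \<ge> 0\<close> by (simp add: f_def add_pos_nonneg)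
  ultimately show ?thesis
    by metis
qed

lemma shifted_column_positive_representation:
  fixes A :: "real^'n^'n"
  assumes "i < l" and "b < m" and "tau > 0" and "w > 0"
    and W_i: "W i = (mat 1 + tau *\<^sub>R (A - lam *\<^sub>R mat 1)) - w *\<^sub>R outer r h"
    and r_int: "r \<in> interior (col_cone R m)" and h_pos: "h \<bullet> R b > 0"
  shows "\<exists>f. (\<forall>a<(l + 1) * m. f a > 0) \<and>
    ((1 / tau - lam) *\<^sub>R mat 1 + A) *v R b = (\<Sum>a<(l + 1) * m. f a *\<^sub>R next_cols W R m a)"
proof -
  define c where "c = w / tau * (h \<bullet> R b)"
  have c: "c > 0"
    using assms(3,4) h_pos by (simp add: c_def)
  obtain q e where q: "\<forall>j<m. q j > 0" and e: "e > 0"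
    and r: "r = (\<Sum>j<m. q j *\<^sub>R R j) + e *\<^sub>R (\<Sum>a\<in>{m..<(l + 1) * m}. next_cols W R m a)"
    using interior_col_cone_positive_decomp[OF r_int] by blast
  have "((1 / tau - lam) *\<^sub>R mat 1 + A) *v R b = c *\<^sub>R r + (1 / tau) *\<^sub>R (W i *v R b)"
    using shifted_matrix_vector_mult_eq[of tau lam A "R b" w r h] assms(3) by (simp add: W_i c_def)
  also have "\<dots> = (\<Sum>j<m. (c * q j) *\<^sub>R R j)
      + (c * e) *\<^sub>R (\<Sum>a\<in>{m..<(l + 1) * m}. next_cols W R m a) + (1 / tau) *\<^sub>R (W i *v R b)"
    by (simp add: r scaleR_add_right scaleR_sum_right)
  finally show ?thesis
    using next_cols_positive_combination[OF assms(1,2), of "\<lambda>j. c * q j" "c * e" "1 / tau"]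
      q e c assms(3) by simp
qed

theorem mainTheorem6:
  fixes A :: "nat \<Rightarrow> real^'n^'n" and lam :: "nat \<Rightarrow> real" and l m :: nat
    and rt ht :: "nat \<Rightarrow> real^'n" and tau w :: "nat \<Rightarrow> real"
    and R :: "nat \<Rightarrow> real^'n"
  assumes dom: "\<forall>i<l. strictly_dominant_eigenvalue (A i) (lam i)"
    and rt_eig: "\<forall>i<l. rt i \<noteq> 0 \<and> A i *v rt i = lam i *\<^sub>R rt i"
    and ht_eig: "\<forall>i<l. ht i \<noteq> 0 \<and> ht i v* A i = lam i *\<^sub>R ht i"
    and sign1: "\<forall>k<l. ht 0 \<bullet> rt k \<ge> 0"
    and sign2: "\<forall>j<l. ht j \<bullet> rt j \<ge> 0"
    and tau_pos: "\<forall>i<l. tau i > 0" and w_pos: "\<forall>i<l. w i > 0"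
    and R_nz: "\<forall>j<m. R j \<noteq> 0"
    and inner_in: "\<forall>x\<in>col_cone rt l. x \<noteq> 0 \<longrightarrow> x \<in> interior (col_cone R m)"
    and outer_in: "\<forall>x\<in>col_cone R m. x \<noteq> 0 \<longrightarrow> x \<in> interior (row_cone ht l)"
  shows "\<forall>i<l. \<exists>P :: nat \<Rightarrow> nat \<Rightarrow> real.
           (\<forall>a<(l+1)*m. \<forall>b<m. P a b > 0) \<and>
           (\<forall>b<m. ((1 / tau i - lam i) *\<^sub>R mat 1 + A i) *v R b =
              (\<Sum>a<(l+1)*m. P a b *\<^sub>R
                 next_cols (\<lambda>j. (mat 1 + tau j *\<^sub>R (A j - lam j *\<^sub>R mat 1))
                                   - w j *\<^sub>R outer (rt j) (ht j)) R m a))"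
proof (intro allI impI)
  fix i assume i: "i < l"
  define W where "W j = (mat 1 + tau j *\<^sub>R (A j - lam j *\<^sub>R mat 1)) - w j *\<^sub>R outer (rt j) (ht j)"
    for j
  have rt_int: "rt i \<in> interior (col_cone R m)"
    using inner_in col_cone_column[OF i] rt_eig i by blast
  have "\<exists>f. (\<forall>a<(l + 1) * m. f a > 0) \<and>
      ((1 / tau i - lam i) *\<^sub>R mat 1 + A i) *v R b = (\<Sum>a<(l + 1) * m. f a *\<^sub>R next_cols W R m a)"
    if b: "b < m" for b
  proof -
    have "ht i \<bullet> R b > 0"
      using interior_row_cone_inner_pos outer_in col_cone_column[OF b] R_nz ht_eig b i by blast
    then show ?thesis
      using shifted_column_positive_representation[where W = W, OF i b _ _ W_def rt_int] tau_pos w_pos i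
      by blast
  qed
  then obtain F where "\<And>b. b < m \<Longrightarrow> (\<forall>a<(l + 1) * m. F b a > 0) \<and>
      ((1 / tau i - lam i) *\<^sub>R mat 1 + A i) *v R b = (\<Sum>a<(l + 1) * m. F b a *\<^sub>R next_cols W R m a)"
    by metis
  then show "\<exists>P. (\<forall>a<(l+1)*m. \<forall>b<m. P a b > 0) \<and>
      (\<forall>b<m. ((1 / tau i - lam i) *\<^sub>R mat 1 + A i) *v R b =
        (\<Sum>a<(l+1)*m. P a b *\<^sub>R next_cols W R m a))"
    by (intro exI[of _ "\<lambda>a b. F b a"]) simp
qed

end
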